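(* Let $(\mathcal S,\mathcal A,H,\mathbb P,\mu)$ be a finite episodic MDP, $\pi^+$ a deterministic target policy and $\epsilon>0$. Define manipulated mean rewards $\tilde\mu_h(s,a)=\mu(s,a)$ if $a=\pi^+_h(s)$, and $\tilde\mu_h(s,a)=Q^{\pi^+}_h(s,\pi^+_h(s))-\mathbb E_{s'\sim\mathbb P(\cdot\mid s,a)}[V^{\pi^+}_{h+1}(s')]-\epsilon$ otherwise, and let $\tilde Q^\pi_h,\tilde V^\pi_h$ be Q-values and values of deterministic policies in the MDP with transitions $\mathbb P$ and step-$h$ mean rewards $\tilde\mu_h$ (with $\tilde V_{H+1}\equiv 0$). Then for every $h\le H$, $s\in\mathcal S$, $a\ne\pi^+_h(s)$ and every deterministic policy $\pi$, $$\tilde Q^{\pi}_h(s,a)\le\tilde Q^{\pi^+}_h(s,\pi^+_h(s))-\epsilon,$$ and $\tilde V^\pi_h(s)\le\tilde V^{\pi^+}_h(s)$ for all $h,s,\pi$, with strict inequality whenever $\pi_h(s)\ne\pi^+_h(s)$.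
   Context: $V^\pi_h(s)=\mathbb E[\sum_{h'=h}^H\mu(s_{h'},\pi_{h'}(s_{h'}))\mid s_h=s]$ and $Q^\pi_h(s,a)=\mu(s,a)+\mathbb E_{s'\sim\mathbb P(\cdot|s,a)}[V^\pi_{h+1}(s')]$ are the true values, with $V^\pi_{H+1}\equiv0$; $\tilde Q^\pi_h(s,a)=\tilde\mu_h(s,a)+\mathbb E_{s'\sim\mathbb P(\cdot|s,a)}[\tilde V^\pi_{h+1}(s')]$, $\tilde V^\pi_h(s)=\tilde Q^\pi_h(s,\pi_h(s))$. *)

theory Defs
  imports "HOL-Probability.Probability"
begin

fun Vrem :: "('s \<Rightarrow> 'a \<Rightarrow> 's pmf) \<Rightarrow> (nat \<Rightarrow> 's \<Rightarrow> 'a \<Rightarrow> real)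
              \<Rightarrow> (nat \<Rightarrow> 's \<Rightarrow> 'a) \<Rightarrow> nat \<Rightarrow> nat \<Rightarrow> 's \<Rightarrow> real" where
  "Vrem P r pol 0 h s = 0"
| "Vrem P r pol (Suc k) h s =
     r h s (pol h s) + measure_pmf.expectation (P s (pol h s)) (\<lambda>s'. Vrem P r pol k (Suc h) s')"

definition Vval :: "nat \<Rightarrow> ('s \<Rightarrow> 'a \<Rightarrow> 's pmf) \<Rightarrow> (nat \<Rightarrow> 's \<Rightarrow> 'a \<Rightarrow> real)
              \<Rightarrow> (nat \<Rightarrow> 's \<Rightarrow> 'a) \<Rightarrow> nat \<Rightarrow> 's \<Rightarrow> real" where
  "Vval H P r pol h s = Vrem P r pol (H + 1 - h) h s"

definition Qval :: "nat \<Rightarrow> ('s \<Rightarrow> 'a \<Rightarrow> 's pmf) \<Rightarrow> (nat \<Rightarrow> 's \<Rightarrow> 'a \<Rightarrow> real)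
              \<Rightarrow> (nat \<Rightarrow> 's \<Rightarrow> 'a) \<Rightarrow> nat \<Rightarrow> 's \<Rightarrow> 'a \<Rightarrow> real" where
  "Qval H P r pol h s a = r h s a + measure_pmf.expectation (P s a) (\<lambda>s'. Vval H P r pol (Suc h) s')"

definition mu_tilde :: "nat \<Rightarrow> ('s \<Rightarrow> 'a \<Rightarrow> 's pmf) \<Rightarrow> ('s \<Rightarrow> 'a \<Rightarrow> real)
              \<Rightarrow> (nat \<Rightarrow> 's \<Rightarrow> 'a) \<Rightarrow> real \<Rightarrow> nat \<Rightarrow> 's \<Rightarrow> 'a \<Rightarrow> real" where
  "mu_tilde H P mu pip eps h s a =
     (if a = pip h s then mu s a
      else Qval H P (\<lambda>_. mu) pip h s (pip h s)
           - measure_pmf.expectation (P s a) (\<lambda>s'. Vval H P (\<lambda>_. mu) pip (Suc h) s')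
           - eps)"

end

theory Submission
  imports Defs
begin

text \<open>The manipulation is built so that every non-target action has advantage exactly
  \<open>-\<epsilon>\<close> against the target policy: its manipulated Q-value is the target's value
  minus \<open>\<epsilon>\<close>, while along the target policy nothing changes. A uniform negative
  advantage gap makes the target policy dominate every deterministic policy, by
  backward induction on the step: a deviating policy loses the gap at the first
  deviation and cannot gain anything afterwards.\<close>

lemma Vrem_cong_on_policy:
  assumes "\<And>h s. r h s (pol h s) = r' h s (pol h s)"
  shows "Vrem P r pol k h = Vrem P r' pol k h"
proof (induction k arbitrary: h)
  case (Suc k)
  show ?case by (rule ext) (simp add: Suc.IH assms)
qed (rule ext, simp)

lemma Vval_cong_on_policy:
  assumes "\<And>h s. r h s (pol h s) = r' h s (pol h s)"
  shows "Vval H P r pol h = Vval H P r' pol h"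
  unfolding Vval_def by (intro Vrem_cong_on_policy assms)

lemma Vval_beyond_horizon:
  assumes "H < h"
  shows "Vval H P r pol h s = 0"
  using assms by (simp add: Vval_def)

lemma Vval_Bellman:
  assumes "h \<le> H"
  shows "Vval H P r pol h s = Qval H P r pol h s (pol h s)"
proof -
  have "H + 1 - h = Suc (H - h)" and "H + 1 - Suc h = H - h"
    using assms by simp_all
  then show ?thesis by (simp add: Vval_def Qval_def)
qed

lemma Qval_mono_continuation:
  fixes P :: "'s::finite \<Rightarrow> 'a \<Rightarrow> 's pmf"
  assumes "\<And>s'. Vval H P r pol (Suc h) s' \<le> Vval H P r pol' (Suc h) s'"
  shows "Qval H P r pol h s a \<le> Qval H P r pol' h s a"
  unfolding Qval_def
  by (simp add: integral_mono integrable_measure_pmf_finite assms)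

lemma Vval_le_of_advantage_gap:
  fixes P :: "'s::finite \<Rightarrow> 'a \<Rightarrow> 's pmf"
  assumes gap: "\<And>h s a. h \<le> H \<Longrightarrow> a \<noteq> pip h s \<Longrightarrow>
                   Qval H P r pip h s a \<le> Vval H P r pip h s - eps"
    and "eps \<ge> 0"
  shows "Vval H P r pol h s \<le> Vval H P r pip h s"
proof (cases "h \<le> H + 1")
  case True
  then show ?thesis
  proof (induction h arbitrary: s rule: inc_induct)
    case base
    then show ?case by (simp add: Vval_beyond_horizon)
  next
    case (step h)
    then have "h \<le> H" by simp
    have "Vval H P r pol h s = Qval H P r pol h s (pol h s)"
      using \<open>h \<le> H\<close> by (rule Vval_Bellman)
    also have "\<dots> \<le> Qval H P r pip h s (pol h s)"
      by (rule Qval_mono_continuation) (rule step.IH)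
    also have "\<dots> \<le> Vval H P r pip h s"
    proof (cases "pol h s = pip h s")
      case True
      then show ?thesis by (simp add: Vval_Bellman[OF \<open>h \<le> H\<close>])
    next
      case False
      then show ?thesis using gap[OF \<open>h \<le> H\<close>] \<open>eps \<ge> 0\<close> by fastforce
    qed
    finally show ?case .
  qed
next
  case False
  then show ?thesis by (simp add: Vval_beyond_horizon)
qed

lemma Qval_le_of_advantage_gap:
  fixes P :: "'s::finite \<Rightarrow> 'a \<Rightarrow> 's pmf"
  assumes gap: "\<And>h s a. h \<le> H \<Longrightarrow> a \<noteq> pip h s \<Longrightarrow>
                   Qval H P r pip h s a \<le> Vval H P r pip h s - eps"
    and "eps \<ge> 0" and "h \<le> H" and "a \<noteq> pip h s"
  shows "Qval H P r pol h s a \<le> Qval H P r pip h s (pip h s) - eps"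
proof -
  have "Qval H P r pol h s a \<le> Qval H P r pip h s a"
    by (rule Qval_mono_continuation) (rule Vval_le_of_advantage_gap[OF gap \<open>eps \<ge> 0\<close>])
  also have "\<dots> \<le> Vval H P r pip h s - eps"
    using gap \<open>h \<le> H\<close> \<open>a \<noteq> pip h s\<close> .
  finally show ?thesis
    using Vval_Bellman[OF \<open>h \<le> H\<close>, of P r pip s] by simp
qed

lemma Vval_less_of_advantage_gap:
  fixes P :: "'s::finite \<Rightarrow> 'a \<Rightarrow> 's pmf"
  assumes gap: "\<And>h s a. h \<le> H \<Longrightarrow> a \<noteq> pip h s \<Longrightarrow>
                   Qval H P r pip h s a \<le> Vval H P r pip h s - eps"
    and "eps > 0" and "h \<le> H" and "pol h s \<noteq> pip h s"
  shows "Vval H P r pol h s < Vval H P r pip h s"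
proof -
  have "Vval H P r pol h s = Qval H P r pol h s (pol h s)"
    using \<open>h \<le> H\<close> by (rule Vval_Bellman)
  also have "\<dots> \<le> Vval H P r pip h s - eps"
    using Qval_le_of_advantage_gap[OF gap _ \<open>h \<le> H\<close> \<open>pol h s \<noteq> pip h s\<close>] \<open>eps > 0\<close>
      Vval_Bellman[OF \<open>h \<le> H\<close>, of P r pip s] by simp
  finally show ?thesis
    using \<open>eps > 0\<close> by simp
qed

lemma Vval_mu_tilde_target:
  "Vval H P (mu_tilde H P mu pip eps) pip h = Vval H P (\<lambda>_. mu) pip h"
  by (rule Vval_cong_on_policy) (simp add: mu_tilde_def)

lemma Qval_mu_tilde_off_target:
  assumes "h \<le> H" and "a \<noteq> pip h s"
  shows "Qval H P (mu_tilde H P mu pip eps) pip h s a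
           = Vval H P (mu_tilde H P mu pip eps) pip h s - eps"
  using assms
  by (simp add: Qval_def mu_tilde_def Vval_mu_tilde_target Vval_Bellman[of h H P "\<lambda>_. mu"])

theorem mainTheorem6:
  fixes P :: "'s::finite \<Rightarrow> 'a::finite \<Rightarrow> 's pmf"
    and mu :: "'s \<Rightarrow> 'a \<Rightarrow> real"
    and pip :: "nat \<Rightarrow> 's \<Rightarrow> 'a"
    and H :: nat and eps :: real
  assumes "eps > 0"
  shows "(\<forall>h\<in>{1..H}. \<forall>s a. \<forall>pol :: nat \<Rightarrow> 's \<Rightarrow> 'a. a \<noteq> pip h s \<longrightarrow>
            Qval H P (mu_tilde H P mu pip eps) pol h s a
              \<le> Qval H P (mu_tilde H P mu pip eps) pip h s (pip h s) - eps)
       \<and> (\<forall>h\<in>{1..H}. \<forall>s. \<forall>pol :: nat \<Rightarrow> 's \<Rightarrow> 'a.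
            Vval H P (mu_tilde H P mu pip eps) pol h s \<le> Vval H P (mu_tilde H P mu pip eps) pip h s
            \<and> (pol h s \<noteq> pip h s \<longrightarrow>
                Vval H P (mu_tilde H P mu pip eps) pol h s < Vval H P (mu_tilde H P mu pip eps) pip h s))"
proof -
  have gap: "\<And>h s a. h \<le> H \<Longrightarrow> a \<noteq> pip h s \<Longrightarrow>
      Qval H P (mu_tilde H P mu pip eps) pip h s a
        \<le> Vval H P (mu_tilde H P mu pip eps) pip h s - eps"
    by (simp add: Qval_mu_tilde_off_target)
  show ?thesis
    using Qval_le_of_advantage_gap[OF gap] Vval_le_of_advantage_gap[OF gap]
      Vval_less_of_advantage_gap[OF gap] \<open>eps > 0\<close>
    by (simp add: less_imp_le)
qed

end
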